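(* For every sufficiently large real $\lambda>0$, $\operatorname{ind}C(\lambda)=\mathrm Z_+$.
   Context: Let $n\ge 2$ be an integer, let $a_1,\dots,a_n>0$ with $\sum_k a_k=1$, and let $d_1,\dots,d_n,\beta_1,\dots,\beta_n$ be real numbers with $\sum_k a_kd_k^2<1$. Put $\alpha_0=0$ and $\alpha_k=\alpha_{k-1}+a_k$. Let $P\in L_2[0,1]$ be the unique function with $P(\alpha_{k-1}+a_kx)=\beta_k+d_kP(x)$ for a.e. $x\in[0,1]$, $k=1,\dots,n$. Assume there is $m\in\{1,\dots,n\}$ with $d_k=0$ for all $k\ne m$. Let $\mathfrak H=\{y\in W_2^1[0,1]: y(0)=y(1)=0\}$ with inner product $\langle y,z\rangle=\int_0^1 y'\overline{z'}\,dx$. For $k=1,\dots,n-1$ put $\gamma_k=\alpha_{k-1}$ if $k\ne m$, $\gamma_m=\alpha_m-a_ma_n$; $\delta_k=\alpha_{k+1}$ if $k\ne m-1$, $\delta_{m-1}=\alpha_{m-1}+a_ma_1$. Let $e_k\in\mathfrak H$ equal $(x-\gamma_k)/(\alpha_k-\gamma_k)$ on $[\gamma_k,\alpha_k]$, $(\delta_k-x)/(\delta_k-\alpha_k)$ on $[\alpha_k,\delta_k]$, and $0$ elsewhere, and let $\mathfrak H_2=\operatorname{span}\{e_1,\dots,e_{n-1}\}$. For $\lambda\in\mathbb R$ let $C(\lambda)$ be the self-adjoint operator on $\mathfrak H_2$ (with the inner product of $\mathfrak H$) such that $\langle C(\lambda)y,z\rangle=\int_0^1\big(y'\overline{z'}+\lambda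 P\cdot(y\overline z)'\big)dx$ for $y,z\in\mathfrak H_2$. For $k=1,\dots,n-1$ define $\zeta_{m-1}=\beta_m-\beta_{m-1}+d_m\beta_1$ (if $m-1\ge1$), $\zeta_m=\beta_{m+1}-\beta_m-d_m\beta_n$ (if $m\le n-1$), and $\zeta_k=\beta_{k+1}-\beta_k$ for the other $k$. Let $\mathrm Z_\pm=\#\{k\in\{1,\dots,n-1\}:\pm\zeta_k>0\}$. For a self-adjoint operator $E$ on a Hilbert space $\mathfrak E$, $\operatorname{ind}E$ is the supremum of dimensions of subspaces $\mathfrak M\subseteq\mathfrak E$ for which there is $\varepsilon>0$ with $\langle Ey,y\rangle\le-\varepsilon\|y\|^2$ for all $y\in\mathfrak M$. *)

theory Defs
  imports "HOL-Analysis.Analysis" "HOL-Library.Function_Algebras" "HOL-Library.Extended_Nat"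
begin

text \<open>Together with the pointwise additive group structure (Function_Algebras) this is the
  complex vector space in which the Sobolev space H lives.\<close>
definition fscale :: "complex \<Rightarrow> (real \<Rightarrow> complex) \<Rightarrow> (real \<Rightarrow> complex)" where
  "fscale c f = (\<lambda>x. c * f x)"

definition alpha :: "(nat \<Rightarrow> real) \<Rightarrow> nat \<Rightarrow> real" where
  "alpha a k = (\<Sum>i=1..k. a i)"

definition gam :: "(nat \<Rightarrow> real) \<Rightarrow> nat \<Rightarrow> nat \<Rightarrow> nat \<Rightarrow> real" where
  "gam a n m k = (if k = m then alpha a m - a m * a n else alpha a (k - 1))"

definition del :: "(nat \<Rightarrow> real) \<Rightarrow> nat \<Rightarrow> nat \<Rightarrow> real" where
  "del a m k = (if m \<ge> 2 \<and> k = m - 1 then alpha a (m - 1) + a m * a 1 else alpha a (k + 1))"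

definition hat :: "real \<Rightarrow> real \<Rightarrow> real \<Rightarrow> real \<Rightarrow> real" where
  "hat g p q x = (if g \<le> x \<and> x \<le> p then (x - g) / (p - g)
                  else if p \<le> x \<and> x \<le> q then (q - x) / (q - p) else 0)"

definition ebasis :: "(nat \<Rightarrow> real) \<Rightarrow> nat \<Rightarrow> nat \<Rightarrow> nat \<Rightarrow> real \<Rightarrow> complex" where
  "ebasis a n m k = (\<lambda>x. complex_of_real (hat (gam a n m k) (alpha a k) (del a m k) x))"

definition H2 :: "(nat \<Rightarrow> real) \<Rightarrow> nat \<Rightarrow> nat \<Rightarrow> (real \<Rightarrow> complex) set" where
  "H2 a n m = module.span fscale (ebasis a n m ` {1..n-1})"

definition innerH :: "(real \<Rightarrow> complex) \<Rightarrow> (real \<Rightarrow> complex) \<Rightarrow> complex" where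
  "innerH y z = set_lebesgue_integral lborel {0..1}
      (\<lambda>x. vector_derivative y (at x) * cnj (vector_derivative z (at x)))"

definition Cform :: "(real \<Rightarrow> real) \<Rightarrow> real \<Rightarrow> (real \<Rightarrow> complex) \<Rightarrow> (real \<Rightarrow> complex) \<Rightarrow> complex" where
  "Cform P lam y z = set_lebesgue_integral lborel {0..1}
      (\<lambda>x. vector_derivative y (at x) * cnj (vector_derivative z (at x))
           + complex_of_real (lam * P x) * vector_derivative (\<lambda>t. y t * cnj (z t)) (at x))"

text \<open>Negative index of the self-adjoint operator E on the space V (with the inner product of H),
  given through its form Eform y z = <E y, z>: the supremum of the dimensions of subspaces M of V
  on which <E y, y> \<le> -eps ||y||^2 for some eps > 0.  (<E y,y> is real, we take its real part.)\<close>
definition ind :: "((real \<Rightarrow> complex) \<Rightarrow> (real \<Rightarrow> complex) \<Rightarrow> complex) \<Rightarrow> (real \<Rightarrow> complex) set \<Rightarrow> enat" where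
  "ind Eform V = Sup {enat (vector_space.dim fscale M) | M.
      module.subspace fscale M \<and> M \<subseteq> V \<and>
      (\<exists>eps>0. \<forall>y\<in>M. Re (Eform y y) \<le> - eps * Re (innerH y y))}"

definition zeta :: "nat \<Rightarrow> nat \<Rightarrow> (nat \<Rightarrow> real) \<Rightarrow> (nat \<Rightarrow> real) \<Rightarrow> nat \<Rightarrow> real" where
  "zeta n m d \<beta> k = (if m \<ge> 2 \<and> k = m - 1 then \<beta> m - \<beta> (m - 1) + d m * \<beta> 1
                     else if m \<le> n - 1 \<and> k = m then \<beta> (m + 1) - \<beta> m - d m * \<beta> n
                     else \<beta> (k + 1) - \<beta> k)"

definition Zplus :: "nat \<Rightarrow> nat \<Rightarrow> (nat \<Rightarrow> real) \<Rightarrow> (nat \<Rightarrow> real) \<Rightarrow> nat" where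
  "Zplus n m d \<beta> = card {k \<in> {1..n-1}. zeta n m d \<beta> k > 0}"

end

theory Submission
  imports Defs
begin

text \<open>Every \<open>y \<in> H\<^sub>2\<close> is \<open>\<Sum> c\<^sub>k e\<^sub>k\<close> with \<open>c\<^sub>k = y(\<alpha>\<^sub>k)\<close>, and
  \<open>\<langle>C(\<lambda>)y,y\<rangle> = \<parallel>y\<parallel>\<^sup>2 + \<lambda> \<integral> P (|y|\<^sup>2)'\<close>. Splitting \<open>[0,1]\<close> into the pieces
  \<open>[\<alpha>\<^sub>k\<^sub>-\<^sub>1, \<alpha>\<^sub>k]\<close> and using the self-similarity of \<open>P\<close>, \<open>\<integral> P g'\<close> equals the boundary
  terms \<open>\<Sum> \<beta>\<^sub>k (g(\<alpha>\<^sub>k) - g(\<alpha>\<^sub>k\<^sub>-\<^sub>1))\<close> plus \<open>d\<^sub>m\<close> times the same integral for \<open>g\<close>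
  rescaled to the \<open>m\<close>-th piece. For \<open>g = |y|\<^sup>2\<close> the hat functions vanish on the image of
  \<open>[\<alpha>\<^sub>1, \<alpha>\<^sub>n\<^sub>-\<^sub>1]\<close> in the \<open>m\<close>-th piece, so two applications leave only boundary terms,
  and summation by parts gives \<open>\<integral> P (|y|\<^sup>2)' = - \<Sum> \<zeta>\<^sub>k |c\<^sub>k|\<^sup>2\<close>. As \<open>\<parallel>y\<parallel>\<^sup>2 \<le> K \<Sum> |c\<^sub>k|\<^sup>2\<close>,
  for large \<open>\<lambda>\<close> the form is uniformly negative on \<open>span {e\<^sub>k | \<zeta>\<^sub>k > 0}\<close>, while every
  uniformly negative subspace meets \<open>span {e\<^sub>k | \<zeta>\<^sub>k \<le> 0}\<close> only in \<open>0\<close>.\<close>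

lemma hat_eq_max_min:
  assumes "g < p" "p < q"
  shows "hat g p q x = max 0 (min ((x - g) / (p - g)) ((q - x) / (q - p)))"
proof -
  have pg: "p - g > 0" and qp: "q - p > 0" using assms by auto
  consider "x < g" | "g \<le> x" "x \<le> p" | "p < x" "x \<le> q" | "q < x" by linarith
  then show ?thesis
  proof cases
    case 1
    then have "(x - g) / (p - g) < 0" using pg by (simp add: divide_neg_pos)
    then show ?thesis using 1 assms by (auto simp: hat_def)
  next
    case 2
    then have "(x - g) / (p - g) \<le> 1" "1 \<le> (q - x) / (q - p)" "0 \<le> (x - g) / (p - g)"
      using pg qp by (simp_all add: divide_le_eq le_divide_eq)
    then show ?thesis using 2 by (auto simp: hat_def)
  next
    case 3
    then have "1 \<le> (x - g) / (p - g)" "(q - x) / (q - p) \<le> 1" "0 \<le> (q - x) / (q - p)"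
      using pg qp by (simp_all add: divide_le_eq le_divide_eq)
    then have "min ((x - g) / (p - g)) ((q - x) / (q - p)) = (q - x) / (q - p)" by linarith
    with 3 \<open>0 \<le> (q - x) / (q - p)\<close> show ?thesis by (auto simp: hat_def)
  next
    case 4
    then have "(q - x) / (q - p) < 0" using qp by (simp add: divide_neg_pos)
    then show ?thesis using 4 assms by (auto simp: hat_def)
  qed
qed

lemma continuous_on_hat:
  assumes "g < p" "p < q"
  shows "continuous_on UNIV (hat g p q)"
proof -
  have "hat g p q = (\<lambda>x. max 0 (min ((x - g) / (p - g)) ((q - x) / (q - p))))"
    using hat_eq_max_min[OF assms] by (simp add: fun_eq_iff)
  then show ?thesis using assms by (auto intro!: continuous_intros)
qed

lemma hat_eq_0_outside: "g < p \<Longrightarrow> p < q \<Longrightarrow> x \<le> g \<or> q \<le> x \<Longrightarrow> hat g p q x = 0"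
  by (auto simp: hat_def)

lemma hat_bounds: "g < p \<Longrightarrow> p < q \<Longrightarrow> 0 \<le> hat g p q x \<and> hat g p q x \<le> 1"
  by (auto simp: hat_def divide_le_eq)

definition hat' :: "real \<Rightarrow> real \<Rightarrow> real \<Rightarrow> real \<Rightarrow> real" where
  "hat' g p q x = (if g < x \<and> x < p then 1 / (p - g) else if p < x \<and> x < q then - 1 / (q - p) else 0)"

lemma borel_measurable_hat'[measurable]: "hat' g p q \<in> borel_measurable borel"
  unfolding hat'_def by measurable

lemma abs_hat'_le: "g < p \<Longrightarrow> p < q \<Longrightarrow> \<bar>hat' g p q x\<bar> \<le> 1 / (p - g) + 1 / (q - p)"
  by (auto simp: hat'_def)

lemma hat_has_real_derivative:
  assumes "g < p" "p < q" "x \<notin> {g, p, q}"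
  shows "(hat g p q has_real_derivative hat' g p q x) (at x)"
proof -
  consider "x < g" | "g < x" "x < p" | "p < x" "x < q" | "q < x" using assms by force
  then show ?thesis
  proof cases
    case 1
    show ?thesis
      by (rule has_field_derivative_transform_within_open[where f = "\<lambda>_. 0" and S = "{..<g}"])
         (use 1 assms in \<open>auto simp: hat_def hat'_def intro!: derivative_eq_intros\<close>)
  next
    case 2
    show ?thesis
      by (rule has_field_derivative_transform_within_open[where f = "\<lambda>x. (x - g) / (p - g)" and S = "{g<..<p}"])
         (use 2 assms in \<open>auto simp: hat_def hat'_def intro!: derivative_eq_intros\<close>)
  next
    case 3
    show ?thesis
      by (rule has_field_derivative_transform_within_open[where f = "\<lambda>x. (q - x) / (q - p)" and S = "{p<..<q}"])
         (use 3 assms in \<open>auto simp: hat_def hat'_def divide_inverse intro!: derivative_eq_intros\<close>)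
  next
    case 4
    show ?thesis
      by (rule has_field_derivative_transform_within_open[where f = "\<lambda>_. 0" and S = "{q<..}"])
         (use 4 assms in \<open>auto simp: hat_def hat'_def intro!: derivative_eq_intros\<close>)
  qed
qed

definition bounded_piecewise_derivative ::
    "(real \<Rightarrow> 'a::real_normed_vector) \<Rightarrow> (real \<Rightarrow> 'a) \<Rightarrow> real set \<Rightarrow> bool" where
  "bounded_piecewise_derivative g g' S \<longleftrightarrow> finite S \<and> continuous_on UNIV g \<and>
     (\<forall>x. x \<notin> S \<longrightarrow> (g has_vector_derivative g' x) (at x)) \<and>
     g' \<in> borel_measurable borel \<and> (\<exists>B. \<forall>x. norm (g' x) \<le> B)"

lemma set_integrable_Icc_bounded:
  fixes h :: "real \<Rightarrow> 'a::{banach, second_countable_topology}"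
  assumes "h \<in> borel_measurable borel" "\<And>x. norm (h x) \<le> B"
  shows "set_integrable lborel {u..v} h"
proof (rule set_integrable_bound[where f = "\<lambda>_. B"])
  show "set_integrable lborel {u..v} (\<lambda>_. B)"
    by (rule borel_integrable_atLeastAtMost') (auto intro: continuous_intros)
  show "set_borel_measurable lborel {u..v} h"
    using assms(1) unfolding set_borel_measurable_def by measurable
  show "AE x in lborel. x \<in> {u..v} \<longrightarrow> norm (h x) \<le> norm B"
    using assms(2) by (auto intro!: always_eventually order_trans[OF _ abs_ge_self])
qed

lemma set_integrable_scaleR_bounded:
  fixes Q :: "real \<Rightarrow> real" and h :: "real \<Rightarrow> 'a::{banach, second_countable_topology}"
  assumes Q: "integrable lborel Q" and h: "h \<in> borel_measurable borel" "\<And>x. norm (h x) \<le> B"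
    and A: "A \<in> sets borel"
  shows "set_integrable lborel A (\<lambda>x. Q x *\<^sub>R h x)"
  unfolding set_integrable_def
proof (rule Bochner_Integration.integrable_bound[where f = "\<lambda>x. B * Q x"])
  show "integrable lborel (\<lambda>x. B * Q x)" using Q by simp
  have [measurable]: "Q \<in> borel_measurable borel" using borel_measurable_integrable[OF Q] by simp
  show "(\<lambda>x. indicator A x *\<^sub>R Q x *\<^sub>R h x) \<in> borel_measurable lborel"
    using h(1) A by measurable
  have "norm (indicator A x *\<^sub>R Q x *\<^sub>R h x) \<le> norm (B * Q x)" for x
  proof -
    have "norm (indicator A x *\<^sub>R Q x *\<^sub>R h x) \<le> \<bar>Q x\<bar> * norm (h x)"
      by (simp add: indicator_def)
    also have "\<dots> \<le> \<bar>Q x\<bar> * B" by (rule mult_left_mono[OF h(2)]) simp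
    also have "\<dots> = norm (B * Q x)"
      using order_trans[OF norm_ge_zero h(2)] by (simp add: abs_mult)
    finally show ?thesis .
  qed
  then show "AE x in lborel. norm (indicator A x *\<^sub>R Q x *\<^sub>R h x) \<le> norm (B * Q x)"
    by simp
qed

lemma set_integral_bounded_piecewise_derivative:
  fixes g :: "real \<Rightarrow> 'a::euclidean_space"
  assumes "bounded_piecewise_derivative g g' S" "u \<le> v"
  shows "(LINT x:{u..v}|lborel. g' x) = g v - g u"
proof -
  obtain B where B: "\<And>x. norm (g' x) \<le> B" and S: "finite S" and cont: "continuous_on UNIV g"
    and der: "\<And>x. x \<notin> S \<Longrightarrow> (g has_vector_derivative g' x) (at x)"
    and meas: "g' \<in> borel_measurable borel"
    using assms(1) unfolding bounded_piecewise_derivative_def by blast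
  have "(g' has_integral (g v - g u)) {u..v}"
    by (rule fundamental_theorem_of_calculus_interior_strong[OF S assms(2)])
       (use der cont in \<open>auto intro: continuous_on_subset\<close>)
  then show ?thesis
    using set_borel_integral_eq_integral(2)[OF set_integrable_Icc_bounded[OF meas B]]
    by (simp add: integral_unique)
qed

lemma bounded_piecewise_derivative_affine:
  assumes g: "bounded_piecewise_derivative g g' S" and c: "c \<noteq> 0"
  shows "bounded_piecewise_derivative (\<lambda>u. g (t + c * u)) (\<lambda>u. c *\<^sub>R g' (t + c * u))
           ((\<lambda>s. (s - t) / c) ` S)"
proof -
  obtain B where B: "\<And>x. norm (g' x) \<le> B" and S: "finite S" and cont: "continuous_on UNIV g"
    and der: "\<And>x. x \<notin> S \<Longrightarrow> (g has_vector_derivative g' x) (at x)"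
    and [measurable]: "g' \<in> borel_measurable borel"
    using g unfolding bounded_piecewise_derivative_def by blast
  have "continuous_on UNIV (g \<circ> (\<lambda>u. t + c * u))"
    by (rule continuous_on_compose) (auto intro!: continuous_intros intro: continuous_on_subset[OF cont])
  then have "continuous_on UNIV (\<lambda>u. g (t + c * u))" by (simp add: o_def)
  moreover have "((\<lambda>u. g (t + c * u)) has_vector_derivative c *\<^sub>R g' (t + c * u)) (at u)"
    if u: "u \<notin> (\<lambda>s. (s - t) / c) ` S" for u
  proof -
    have "t + c * u \<notin> S"
      using u c by (metis (no_types, lifting) add_diff_cancel_left' image_eqI nonzero_mult_div_cancel_left)
    moreover have "((\<lambda>u. t + c * u) has_vector_derivative c) (at u)"
      by (auto simp: has_real_derivative_iff_has_vector_derivative[symmetric] intro!: derivative_eq_intros)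
    ultimately show ?thesis
      using vector_diff_chain_at der by (fastforce simp: o_def)
  qed
  moreover have "norm (c *\<^sub>R g' (t + c * u)) \<le> \<bar>c\<bar> * B" for u
    using B[of "t + c * u"] by (simp add: mult_left_mono)
  ultimately show ?thesis
    using S unfolding bounded_piecewise_derivative_def by (auto intro!: exI[of _ "\<bar>c\<bar> * B"])
qed

lemma borel_measurable_cnj[measurable]:
  "f \<in> borel_measurable M \<Longrightarrow> (\<lambda>x. cnj (f x)) \<in> borel_measurable M"
  using measurable_compose[OF _ borel_measurable_continuous_onI[OF continuous_on_cnj[OF continuous_on_id]]]
  by blast

lemma bounded_piecewise_derivative_mult_cnj:
  fixes f f' :: "real \<Rightarrow> complex"
  assumes f: "bounded_piecewise_derivative f f' S" and bounded: "\<And>x. norm (f x) \<le> C"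
  shows "bounded_piecewise_derivative (\<lambda>x. f x * cnj (f x))
           (\<lambda>x. f' x * cnj (f x) + f x * cnj (f' x)) S"
proof -
  obtain B where B: "\<And>x. norm (f' x) \<le> B" and S: "finite S" and cont: "continuous_on UNIV f"
    and der: "\<And>x. x \<notin> S \<Longrightarrow> (f has_vector_derivative f' x) (at x)"
    and [measurable]: "f' \<in> borel_measurable borel"
    using f unfolding bounded_piecewise_derivative_def by blast
  have [measurable]: "f \<in> borel_measurable borel"
    using cont by (rule borel_measurable_continuous_onI)
  have "((\<lambda>x. f x * cnj (f x)) has_vector_derivative f' x * cnj (f x) + f x * cnj (f' x)) (at x)"
    if "x \<notin> S" for x
    using has_vector_derivative_mult[OF der has_vector_derivative_cnj[OF der]] that
    by (simp add: add.commute)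
  moreover have "norm (f' x * cnj (f x) + f x * cnj (f' x)) \<le> 2 * (B * C)" for x
  proof -
    have "norm (f' x * cnj (f x) + f x * cnj (f' x)) \<le> norm (f' x) * norm (f x) + norm (f x) * norm (f' x)"
      by (rule order_trans[OF norm_triangle_ineq]) (simp add: norm_mult)
    also have "\<dots> \<le> B * C + C * B"
      using B[of x] bounded[of x] by (intro add_mono mult_mono) (auto intro: order_trans[OF norm_ge_zero])
    finally show ?thesis by simp
  qed
  moreover have "continuous_on UNIV (\<lambda>x. f x * cnj (f x))"
    by (intro continuous_intros cont)
  ultimately show ?thesis
    using S unfolding bounded_piecewise_derivative_def by (auto intro!: exI[of _ "2 * (B * C)"])
qed

lemma set_integral_Icc_affine:
  fixes f :: "real \<Rightarrow> 'a::{banach, second_countable_topology}"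
  assumes "c > 0"
  shows "(LINT x:{t..t + c}|lborel. f x) = c *\<^sub>R (LINT u:{0..1}|lborel. f (t + c * u))"
proof -
  have "(LINT x:{t..t + c}|lborel. f x)
      = \<bar>c\<bar> *\<^sub>R integral\<^sup>L lborel (\<lambda>u. indicator {t..t + c} (t + c * u) *\<^sub>R f (t + c * u))"
    unfolding set_lebesgue_integral_def by (rule lborel_integral_real_affine) (use assms in auto)
  also have "(\<lambda>u. indicator {t..t + c} (t + c * u) *\<^sub>R f (t + c * u))
      = (\<lambda>u. indicator {0..1} u *\<^sub>R f (t + c * u))"
    using assms by (auto simp: indicator_def zero_le_mult_iff mult_le_cancel_left1 fun_eq_iff)
  finally show ?thesis using assms by (simp add: set_lebesgue_integral_def)
qed

lemma set_integral_Icc_partition: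
  fixes F :: "real \<Rightarrow> 'a::{banach, second_countable_topology}" and s :: "nat \<Rightarrow> real"
  assumes "\<And>k. k < j \<Longrightarrow> s k \<le> s (Suc k)" and "set_integrable lborel {s 0..s j} F"
  shows "(LINT x:{s 0..s j}|lborel. F x) = (\<Sum>k=1..j. LINT x:{s (k - 1)..s k}|lborel. F x)"
  using assms
proof (induction j)
  case 0
  have "AE x in lborel. indicator {s 0} x *\<^sub>R F x = 0"
    using AE_lborel_singleton[of "s 0"] by (rule eventually_mono) (simp add: indicator_def)
  then show ?case
    unfolding set_lebesgue_integral_def by (simp add: integral_eq_zero_AE)
next
  case (Suc j)
  have le: "s 0 \<le> s j"
    using Suc.prems(1) by (induction j) (auto intro: order_trans)
  have sj: "s j \<le> s (Suc j)" using Suc.prems(1) by simp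
  have int1: "set_integrable lborel {s 0..s j} F"
    by (rule set_integrable_subset[OF Suc.prems(2)]) (use sj in auto)
  have int2: "set_integrable lborel {s j..s (Suc j)} F"
    by (rule set_integrable_subset[OF Suc.prems(2)]) (use le in auto)
  have "AE x in lborel. \<not> (x \<in> {s 0..s j} \<and> x \<in> {s j..s (Suc j)})"
    by (rule AE_I[where N = "{s j}"]) auto
  then have "(LINT x:{s 0..s (Suc j)}|lborel. F x)
      = (LINT x:{s 0..s j}|lborel. F x) + (LINT x:{s j..s (Suc j)}|lborel. F x)"
    using le sj int1 int2 set_integral_Un_AE[of "{s 0..s j}" "{s j..s (Suc j)}" lborel F]
    by (simp add: ivl_disj_un_two_touch)
  then show ?case using Suc.IH Suc.prems int1 by simp
qed

lemma set_integral_cong_finite: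
  fixes f g :: "real \<Rightarrow> 'a::{banach, second_countable_topology}"
  assumes S: "finite S" and f: "f \<in> borel_measurable borel" and eq: "\<And>x. x \<notin> S \<Longrightarrow> g x = f x"
    and A: "A \<in> sets borel"
  shows "(LINT x:A|lborel. g x) = (LINT x:A|lborel. f x)"
proof (rule set_lebesgue_integral_cong_AE)
  show "g \<in> borel_measurable lborel"
    using measurable_discrete_difference[OF f, of S g] S eq by (auto intro: countable_finite)
  show "AE x\<in>A in lborel. g x = f x"
    using AE_not_in[OF finite_imp_null_set_lborel[OF S]] by (rule eventually_mono) (auto simp: eq)
qed (use f A in auto)

lemma sum_mult_diff_by_parts:
  fixes b w :: "nat \<Rightarrow> 'a::comm_ring"
  assumes "n \<ge> 1"
  shows "(\<Sum>k=1..n. b k * (w k - w (k - 1)))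
       = (\<Sum>k=1..n-1. w k * (b k - b (k + 1))) - b 1 * w 0 + b n * w n"
  using assms
proof (induction n rule: dec_induct)
  case (step n)
  then have "(\<Sum>k=1..Suc n - 1. w k * (b k - b (k + 1)))
      = (\<Sum>k=1..n-1. w k * (b k - b (k + 1))) + w n * (b n - b (n + 1))"
    by (cases n) (auto simp: sum.atLeast_Suc_atMost_Suc_shift)
  with step show ?case by (simp add: algebra_simps)
qed (simp add: algebra_simps)

context vector_space
begin

lemma independent_Un_span_Int:
  assumes B: "independent B" and F: "independent F" and BF: "span B \<inter> span F \<subseteq> {0}"
  shows "independent (B \<union> F)"
  unfolding local.independent_explicit_module
proof (intro allI impI)
  fix t u v
  assume t: "finite t" "t \<subseteq> B \<union> F" and sum: "(\<Sum>v\<in>t. scale (u v) v) = 0" and v: "v \<in> t"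
  define sB where "sB = (\<Sum>v\<in>t \<inter> B. scale (u v) v)"
  define sF where "sF = (\<Sum>v\<in>t - B. scale (u v) v)"
  have "sB + sF = 0"
    using sum sum.Int_Diff[OF t(1), of "\<lambda>v. scale (u v) v" B] by (simp add: sB_def sF_def)
  moreover have "sB \<in> span B" "sF \<in> span F"
    unfolding sB_def sF_def using t(2)
    by (auto intro!: local.span_sum local.span_scale intro: local.span_base)
  ultimately have "sB \<in> span B \<inter> span F"
    by (metis IntI add.commute add_implies_diff diff_0 local.span_neg)
  then have "sB = 0" "sF = 0" using BF \<open>sB + sF = 0\<close> by auto
  then show "u v = 0"
    using local.independentD[OF B, of "t \<inter> B" u v] local.independentD[OF F, of "t - B" u v] t v
    by (cases "v \<in> B") (auto simp: sB_def sF_def)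
qed

lemma dim_add_card_le:
  assumes M: "subspace M" "M \<subseteq> span T" and T: "finite T"
    and F: "independent F" "F \<subseteq> span T" and MF: "M \<inter> span F \<subseteq> {0}"
  shows "dim M + card F \<le> card T"
proof -
  obtain B where B: "B \<subseteq> M" "independent B" "M \<subseteq> span B" "card B = dim M"
    using local.basis_exists by metis
  have BF: "span B \<inter> span F \<subseteq> {0}" using local.span_subspace[OF B(1) B(3) M(1)] MF by simp
  have "finite B" using local.independent_span_bound[OF T B(2)] B(1) M(2) by auto
  have "B \<inter> F = {}"
    using BF B(2) local.span_base[of _ B] local.span_base[of _ F] local.dependent_zero[of B] by blast
  moreover have "finite F" using local.independent_span_bound[OF T F] by simp
  moreover have "card (B \<union> F) \<le> card T"
    using local.independent_span_bound[OF T independent_Un_span_Int[OF B(2) F(1) BF]] B(1) M(2) F(2)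
    by auto
  ultimately show ?thesis using \<open>finite B\<close> B(4) card_Un_disjoint[of B F] by simp
qed

end

lemma fscale_apply[simp]: "fscale c f x = c * f x"
  by (simp add: fscale_def)

interpretation fs: vector_space fscale
  by unfold_locales (auto simp: fun_eq_iff algebra_simps)

lemma sum_fun_apply: "(sum f A) x = (\<Sum>a\<in>A. f a x)"
  by (induction A rule: infinite_finite_induct) auto

lemma alpha_0[simp]: "alpha a 0 = 0"
  by (simp add: alpha_def)

lemma alpha_Suc: "alpha a (Suc k) = alpha a k + a (Suc k)"
  by (simp add: alpha_def)

lemma alpha_eq_pred: "k \<ge> 1 \<Longrightarrow> alpha a k = alpha a (k - 1) + a k"
  using alpha_Suc[of a "k - 1"] by simp

locale self_similar =
  fixes n m :: nat and a d \<beta> :: "nat \<Rightarrow> real" and P :: "real \<Rightarrow> real"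
  assumes n2: "n \<ge> 2"
    and apos: "\<And>k. k \<in> {1..n} \<Longrightarrow> a k > 0"
    and asum: "(\<Sum>k=1..n. a k) = 1"
    and m: "m \<in> {1..n}"
    and dzero: "\<And>k. k \<in> {1..n} \<Longrightarrow> k \<noteq> m \<Longrightarrow> d k = 0"
    and Pmeas: "set_borel_measurable lborel {0..1} P"
    and PL2: "set_integrable lborel {0..1} (\<lambda>x. (P x)\<^sup>2)"
    and Pself: "\<And>k. k \<in> {1..n} \<Longrightarrow>
       AE x in lborel. x \<in> {0..1} \<longrightarrow> P (alpha a (k - 1) + a k * x) = \<beta> k + d k * P x"
begin

lemma alpha_n: "alpha a n = 1"
  using asum by (simp add: alpha_def)

lemma alpha_mono: "k \<le> j \<Longrightarrow> j \<le> n \<Longrightarrow> alpha a k \<le> alpha a j"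
proof (induction j)
  case (Suc j)
  then show ?case
    using apos[of "Suc j"] by (cases "k = Suc j") (auto simp: alpha_Suc)
qed simp

lemma alpha_nonneg: "k \<le> n \<Longrightarrow> 0 \<le> alpha a k"
  using alpha_mono[of 0 k] by simp

lemma alpha_le_1: "k \<le> n \<Longrightarrow> alpha a k \<le> 1"
  using alpha_mono[of k n] alpha_n by simp

lemma a_le_1: "k \<in> {1..n} \<Longrightarrow> a k \<le> 1"
  using alpha_eq_pred[of k a] alpha_le_1[of k] alpha_nonneg[of "k - 1"] by fastforce

definition phi :: "nat \<Rightarrow> real \<Rightarrow> real" where
  "phi k x = alpha a (k - 1) + a k * x"

lemma phi_maps_unit_interval: "k \<in> {1..n} \<Longrightarrow> x \<in> {0..1} \<Longrightarrow> phi k x \<in> {alpha a (k - 1)..alpha a k}"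
  using apos[of k] alpha_eq_pred[of k a] by (auto simp: phi_def mult_left_le)

definition P0 :: "real \<Rightarrow> real" where
  "P0 x = indicator {0..1} x * P x"

lemma borel_measurable_P0[measurable]: "P0 \<in> borel_measurable borel"
  using Pmeas unfolding set_borel_measurable_def P0_def by simp

lemma integrable_P0: "integrable lborel P0"
proof -
  have "set_integrable lborel {0..1} (\<lambda>x. 1 + (P x)\<^sup>2)"
    by (rule set_integral_add(1)[OF _ PL2]) (rule borel_integrable_atLeastAtMost', simp)
  then have "set_integrable lborel {0..1} P"
  proof (rule set_integrable_bound)
    have "\<bar>y\<bar> \<le> \<bar>1 + y\<^sup>2\<bar>" for y :: real
      using sum_squares_bound[of "\<bar>y\<bar>" 1] by (simp add: power2_eq_square)
    then show "AE x in lborel. x \<in> {0..1} \<longrightarrow> norm (P x) \<le> norm (1 + (P x)\<^sup>2)" by auto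
  qed (rule Pmeas)
  then show ?thesis unfolding set_integrable_def P0_def by simp
qed

lemma P0_self_similar:
  assumes k: "k \<in> {1..n}"
  shows "AE x in lborel. x \<in> {0..1} \<longrightarrow> P0 (phi k x) = \<beta> k + d k * P0 x"
proof (rule eventually_mono[OF Pself[OF k]], intro impI)
  fix x assume x: "x \<in> {0..1}"
    and eq: "x \<in> {0..1} \<longrightarrow> P (alpha a (k - 1) + a k * x) = \<beta> k + d k * P x"
  have "0 \<le> alpha a (k - 1)" "alpha a k \<le> 1"
    using k by (auto intro: alpha_nonneg alpha_le_1)
  then have "phi k x \<in> {0..1}"
    using phi_maps_unit_interval[OF k x] by auto
  then show "P0 (phi k x) = \<beta> k + d k * P0 x"
    using eq x by (simp add: P0_def phi_def)
qed

lemma set_integral_P0_piece: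
  fixes g g' :: "real \<Rightarrow> complex"
  assumes k: "k \<in> {1..n}" and g: "bounded_piecewise_derivative g g' S"
  shows "(LINT x:{alpha a (k - 1)..alpha a k}|lborel. of_real (P0 x) * g' x)
     = of_real (\<beta> k) * (g (alpha a k) - g (alpha a (k - 1)))
       + of_real (d k) * (LINT u:{0..1}|lborel. of_real (P0 u) * (of_real (a k) * g' (phi k u)))"
proof -
  obtain B where B: "\<And>x. norm (g' x) \<le> B" and [measurable]: "g' \<in> borel_measurable borel"
    using g unfolding bounded_piecewise_derivative_def by blast
  define t where "t = alpha a (k - 1)"
  define c where "c = a k"
  have c: "c > 0" using apos[OF k] by (simp add: c_def)
  have ak: "alpha a k = t + c" using k by (simp add: t_def c_def alpha_eq_pred)
  have phi: "phi k u = t + c * u" for u by (simp add: phi_def t_def c_def)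
  have int1: "set_integrable lborel {0..1} (\<lambda>u. g' (t + c * u))"
    by (rule set_integrable_Icc_bounded[where B = B]) (use B in simp_all)
  have int2: "set_integrable lborel {0..1} (\<lambda>u. of_real (P0 u) * g' (t + c * u))"
    using set_integrable_scaleR_bounded[OF integrable_P0, of "\<lambda>u. g' (t + c * u)" B]
    by (simp add: B scaleR_conv_of_real)
  have ftc: "c *\<^sub>R (LINT u:{0..1}|lborel. g' (t + c * u)) = g (t + c) - g t"
    using set_integral_Icc_affine[OF c, where f = g' and t = t]
          set_integral_bounded_piecewise_derivative[OF g, of t "t + c"] c by simp
  have "(LINT x:{t..t + c}|lborel. of_real (P0 x) * g' x)
      = c *\<^sub>R (LINT u:{0..1}|lborel. of_real (P0 (t + c * u)) * g' (t + c * u))"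
    by (rule set_integral_Icc_affine[OF c])
  also have "(LINT u:{0..1}|lborel. of_real (P0 (t + c * u)) * g' (t + c * u))
     = (LINT u:{0..1}|lborel. of_real (\<beta> k) * g' (t + c * u) + of_real (d k) * (of_real (P0 u) * g' (t + c * u)))"
    by (rule set_lebesgue_integral_cong_AE)
       (use P0_self_similar[OF k] in \<open>auto simp: phi algebra_simps elim!: eventually_mono\<close>)
  also have "\<dots> = of_real (\<beta> k) * (LINT u:{0..1}|lborel. g' (t + c * u))
      + of_real (d k) * (LINT u:{0..1}|lborel. of_real (P0 u) * g' (t + c * u))"
    using int1 int2 by (simp add: set_integral_add(2))
  finally show ?thesis
    unfolding ak phi t_def[symmetric] c_def[symmetric] ftc[symmetric]
    by (simp add: scaleR_conv_of_real algebra_simps)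
qed

lemma set_integral_P0_derivative:
  fixes g g' :: "real \<Rightarrow> complex"
  assumes g: "bounded_piecewise_derivative g g' S"
  shows "(LINT x:{0..1}|lborel. of_real (P0 x) * g' x)
     = (\<Sum>k=1..n. of_real (\<beta> k) * (g (alpha a k) - g (alpha a (k - 1))))
       + of_real (d m) * (LINT u:{0..1}|lborel. of_real (P0 u) * (of_real (a m) * g' (phi m u)))"
proof -
  obtain B where B: "\<And>x. norm (g' x) \<le> B" and [measurable]: "g' \<in> borel_measurable borel"
    using g unfolding bounded_piecewise_derivative_def by blast
  define J where "J k = (LINT u:{0..1}|lborel. of_real (P0 u) * (of_real (a k) * g' (phi k u)))" for k
  have int: "set_integrable lborel {alpha a 0..alpha a n} (\<lambda>x. of_real (P0 x) * g' x)"
    using set_integrable_scaleR_bounded[OF integrable_P0, of g' B] by (simp add: B scaleR_conv_of_real)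
  have "(LINT x:{0..1}|lborel. of_real (P0 x) * g' x)
      = (LINT x:{alpha a 0..alpha a n}|lborel. of_real (P0 x) * g' x)"
    by (simp add: alpha_n)
  also have "\<dots> = (\<Sum>k=1..n. LINT x:{alpha a (k - 1)..alpha a k}|lborel. of_real (P0 x) * g' x)"
    by (rule set_integral_Icc_partition[OF _ int]) (use alpha_mono in simp)
  also have "\<dots> = (\<Sum>k=1..n. of_real (\<beta> k) * (g (alpha a k) - g (alpha a (k - 1))) + of_real (d k) * J k)"
    unfolding J_def by (rule sum.cong[OF refl set_integral_P0_piece[OF _ g]])
  also have "\<dots> = (\<Sum>k=1..n. of_real (\<beta> k) * (g (alpha a k) - g (alpha a (k - 1))))
      + (\<Sum>k=1..n. of_real (d k) * J k)"
    by (rule sum.distrib)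
  also have "(\<Sum>k=1..n. of_real (d k) * J k) = of_real (d m) * J m"
    using m by (subst sum.remove[OF _ m]) (auto simp: dzero intro!: sum.neutral)
  finally show ?thesis by (simp add: J_def)
qed

definition basis :: "nat \<Rightarrow> real \<Rightarrow> real" where
  "basis k = hat (gam a n m k) (alpha a k) (del a m k)"

definition basis' :: "nat \<Rightarrow> real \<Rightarrow> real" where
  "basis' k = hat' (gam a n m k) (alpha a k) (del a m k)"

lemma gam_del_bounds:
  assumes k: "k \<in> {1..n-1}"
  shows "alpha a (k - 1) \<le> gam a n m k" "gam a n m k < alpha a k"
    "alpha a k < del a m k" "del a m k \<le> alpha a (k + 1)"
proof -
  have ak: "alpha a k = alpha a (k - 1) + a k" using k by (intro alpha_eq_pred) auto
  have ak1: "alpha a (k + 1) = alpha a k + a (k + 1)" by (simp add: alpha_Suc)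
  have pos: "a k > 0" "a (k + 1) > 0" "a n > 0" "a 1 > 0" using k n2 apos by auto
  have le1: "a n \<le> 1" "a 1 \<le> 1" using n2 by (auto intro: a_le_1)
  have "a k * a n \<le> a k" "a m * a 1 \<le> a m"
    using le1 pos mult_left_le[of _ "a k"] mult_left_le[of _ "a m"] apos[OF m] by auto
  moreover have "0 < a k * a n" "0 < a m * a 1" using pos apos[OF m] by auto
  ultimately show "alpha a (k - 1) \<le> gam a n m k" "gam a n m k < alpha a k"
    "alpha a k < del a m k" "del a m k \<le> alpha a (k + 1)"
    using ak ak1 pos by (auto simp: gam_def del_def)
qed

lemma basis_at_alpha:
  assumes j: "j \<in> {1..n-1}" and k: "k \<le> n"
  shows "basis j (alpha a k) = (if j = k then 1 else 0)"
proof -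
  note bounds = gam_del_bounds[OF j]
  consider "k < j" | "k = j" | "j < k" by linarith
  then show ?thesis
  proof cases
    case 1
    then have "alpha a k \<le> alpha a (j - 1)" using j by (intro alpha_mono) auto
    then show ?thesis using 1 bounds by (auto simp: basis_def intro!: hat_eq_0_outside)
  next
    case 3
    then have "alpha a (j + 1) \<le> alpha a k" using k by (intro alpha_mono) auto
    then show ?thesis using 3 bounds by (auto simp: basis_def intro!: hat_eq_0_outside)
  qed (use bounds in \<open>simp add: basis_def hat_def\<close>)
qed

text \<open>\<open>middle = phi m ` {\<alpha>\<^sub>1..\<alpha>\<^sub>n\<^sub>-\<^sub>1}\<close>, extended to the end of the \<open>m\<close>-th piece on the left if
  \<open>m = 1\<close> and on the right if \<open>m = n\<close>. The modified endpoints \<open>\<gamma>\<^sub>m\<close>, \<open>\<delta>\<^sub>m\<^sub>-\<^sub>1\<close> are what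
  make every \<open>e\<^sub>k\<close> vanish there.\<close>

definition middle :: "real set" where
  "middle = {alpha a (m - 1) + (if m \<ge> 2 then a m * a 1 else 0)
             .. alpha a m - (if m \<le> n - 1 then a m * a n else 0)}"

lemma basis_vanishes_on_middle:
  assumes k: "k \<in> {1..n-1}" and x: "x \<in> middle"
  shows "basis k x = 0" "basis' k x = 0"
proof -
  have pos: "0 < a m * a 1" "0 < a m * a n" using apos m n2 by auto
  consider "k + 1 < m" | "k + 1 = m" | "k = m" | "k > m" by linarith
  then have "x \<le> gam a n m k \<or> del a m k \<le> x"
  proof cases
    case 1
    then have "del a m k \<le> alpha a (m - 1)"
      using gam_del_bounds(4)[OF k] alpha_mono[of "k + 1" "m - 1"] m by fastforce
    then show ?thesis using x 1 pos(1) by (auto simp: middle_def split: if_splits)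
  next
    case 4
    then have "alpha a m \<le> gam a n m k"
      using alpha_mono[of m "k - 1"] k by (auto simp: gam_def)
    then show ?thesis using x pos(2) by (auto simp: middle_def split: if_splits)
  qed (use x k in \<open>auto simp: middle_def gam_def del_def\<close>)
  then show "basis k x = 0" "basis' k x = 0"
    using gam_del_bounds[OF k]
    by (auto simp: basis_def basis'_def hat_eq_0_outside hat'_def)
qed

lemma phi_alpha_in_middle:
  assumes j: "j \<in> {1..n-1}"
  shows "phi m (alpha a j) \<in> middle"
proof -
  have am: "0 < a m" using apos m by auto
  have "alpha a 1 \<le> alpha a j" "alpha a j \<le> alpha a (n - 1)" using j by (auto intro: alpha_mono)
  moreover have "alpha a (n - 1) = 1 - a n" "alpha a 1 = a 1"
    using alpha_eq_pred[of n a] alpha_n n2 by (simp_all add: alpha_def)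
  moreover have "0 \<le> alpha a j" "0 \<le> a n" using j apos[of n] n2 by (auto intro: alpha_nonneg)
  ultimately have "a m * a 1 \<le> a m * alpha a j" "a m * alpha a j \<le> a m * (1 - a n)"
    "0 \<le> a m * alpha a j" "0 \<le> a m * a n"
    using am by (auto intro: mult_left_mono)
  then show ?thesis
    using alpha_eq_pred[of m a] m by (auto simp: middle_def phi_def algebra_simps)
qed

lemma phi_in_middle:
  assumes u: "u \<in> {alpha a (m - 1)..alpha a m}"
  shows "phi m u \<in> middle"
proof -
  have am: "0 < a m" using apos m by auto
  have "0 \<le> alpha a (m - 1)" "alpha a m \<le> 1" using m by (auto intro: alpha_nonneg alpha_le_1)
  then have u01: "0 \<le> u" "u \<le> 1" using u by auto
  have "a m * a 1 \<le> a m * u" if "m \<ge> 2"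
  proof -
    have "alpha a 1 \<le> alpha a (m - 1)" using that m by (intro alpha_mono) auto
    then show ?thesis using u am by (simp add: alpha_def)
  qed
  moreover have "a m * u \<le> a m * (1 - a n)" if "m \<le> n - 1"
  proof -
    have "alpha a m \<le> alpha a (n - 1)" using that by (intro alpha_mono) auto
    then show ?thesis using u am alpha_eq_pred[of n a] alpha_n n2 by auto
  qed
  moreover have "0 \<le> a m * u" "a m * u \<le> a m" using am u01 by (auto simp: mult_left_le)
  ultimately show ?thesis
    using alpha_eq_pred[of m a] m by (auto simp: middle_def phi_def algebra_simps)
qed

definition kinks :: "real set" where
  "kinks = (\<Union>k\<in>{1..n-1}. {gam a n m k, alpha a k, del a m k})"

definition slope :: "nat \<Rightarrow> real" where
  "slope k = 1 / (alpha a k - gam a n m k) + 1 / (del a m k - alpha a k)"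

definition Y :: "(nat \<Rightarrow> complex) \<Rightarrow> real \<Rightarrow> complex" where
  "Y c x = (\<Sum>k\<in>{1..n-1}. c k * of_real (basis k x))"

definition Y' :: "(nat \<Rightarrow> complex) \<Rightarrow> real \<Rightarrow> complex" where
  "Y' c x = (\<Sum>k\<in>{1..n-1}. c k * of_real (basis' k x))"

lemma borel_measurable_Y'[measurable]: "Y' c \<in> borel_measurable borel"
  unfolding Y'_def[abs_def] basis'_def by measurable

lemma slope_pos: "k \<in> {1..n-1} \<Longrightarrow> 0 < slope k"
  using gam_del_bounds[of k] unfolding slope_def by (auto intro!: add_pos_pos)

lemma abs_basis'_le: "k \<in> {1..n-1} \<Longrightarrow> \<bar>basis' k x\<bar> \<le> slope k"
  using gam_del_bounds unfolding basis'_def slope_def by (intro abs_hat'_le) auto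

lemma norm_Y_le: "norm (Y c x) \<le> (\<Sum>k\<in>{1..n-1}. norm (c k))"
  unfolding Y_def
proof (rule order_trans[OF norm_sum sum_mono])
  fix k assume "k \<in> {1..n-1}"
  then show "norm (c k * of_real (basis k x)) \<le> norm (c k)"
    using gam_del_bounds hat_bounds
    by (auto simp: basis_def norm_mult mult_left_le)
qed

lemma norm_Y'_le: "norm (Y' c x) \<le> (\<Sum>k\<in>{1..n-1}. norm (c k) * slope k)"
  unfolding Y'_def
proof (rule order_trans[OF norm_sum sum_mono])
  fix k assume "k \<in> {1..n-1}"
  then show "norm (c k * of_real (basis' k x)) \<le> norm (c k) * slope k"
    using abs_basis'_le by (simp add: norm_mult mult_left_mono)
qed

lemma bounded_piecewise_derivative_Y: "bounded_piecewise_derivative (Y c) (Y' c) kinks"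
  unfolding bounded_piecewise_derivative_def
proof (intro conjI allI impI exI)
  show "finite kinks" by (simp add: kinks_def)
  show "continuous_on UNIV (Y c)"
    unfolding Y_def[abs_def] basis_def
    using gam_del_bounds by (intro continuous_intros continuous_on_hat) auto
  show "(Y c has_vector_derivative Y' c x) (at x)" if "x \<notin> kinks" for x
    unfolding Y_def[abs_def] Y'_def basis_def basis'_def
    using gam_del_bounds that
    by (intro has_vector_derivative_sum has_vector_derivative_mult_right
        has_vector_derivative_of_real hat_has_real_derivative) (auto simp: kinks_def)
  show "Y' c \<in> borel_measurable borel" by measurable
  show "norm (Y' c x) \<le> (\<Sum>k\<in>{1..n-1}. norm (c k) * slope k)" for x
    by (rule norm_Y'_le)
qed

definition Ysq :: "(nat \<Rightarrow> complex) \<Rightarrow> real \<Rightarrow> complex" where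
  "Ysq c x = Y c x * cnj (Y c x)"

definition Ysq' :: "(nat \<Rightarrow> complex) \<Rightarrow> real \<Rightarrow> complex" where
  "Ysq' c x = Y' c x * cnj (Y c x) + Y c x * cnj (Y' c x)"

lemma bounded_piecewise_derivative_Ysq: "bounded_piecewise_derivative (Ysq c) (Ysq' c) kinks"
  unfolding Ysq_def[abs_def] Ysq'_def[abs_def]
  by (rule bounded_piecewise_derivative_mult_cnj[OF bounded_piecewise_derivative_Y norm_Y_le])

lemma Y_at_alpha:
  assumes "j \<le> n"
  shows "Y c (alpha a j) = (if j \<in> {1..n-1} then c j else 0)"
proof -
  have "Y c (alpha a j) = (\<Sum>k\<in>{1..n-1}. if k = j then c k else 0)"
    unfolding Y_def by (rule sum.cong) (simp_all add: basis_at_alpha assms)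
  then show ?thesis by (simp add: sum.delta')
qed

definition coeff_sq :: "(nat \<Rightarrow> complex) \<Rightarrow> nat \<Rightarrow> real" where
  "coeff_sq c j = (if j \<in> {1..n-1} then (cmod (c j))\<^sup>2 else 0)"

lemma Ysq_at_alpha: "j \<le> n \<Longrightarrow> Ysq c (alpha a j) = of_real (coeff_sq c j)"
  by (simp add: Ysq_def Y_at_alpha coeff_sq_def complex_norm_square[symmetric] del: of_real_power)

lemma Ysq_vanishes_on_middle: "x \<in> middle \<Longrightarrow> Ysq c x = 0" "x \<in> middle \<Longrightarrow> Ysq' c x = 0"
  by (simp_all add: Ysq_def Ysq'_def Y_def Y'_def basis_vanishes_on_middle)

lemma sum_zeta_mult:
  fixes w :: "nat \<Rightarrow> real"
  assumes w: "w 0 = 0" "w n = 0"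
  shows "(\<Sum>k=1..n-1. zeta n m d \<beta> k * w k)
       = (\<Sum>k=1..n-1. (\<beta> (k + 1) - \<beta> k) * w k) + d m * (\<beta> 1 * w (m - 1) - \<beta> n * w m)"
proof -
  have "(\<Sum>k=1..n-1. zeta n m d \<beta> k * w k)
      = (\<Sum>k=1..n-1. (\<beta> (k + 1) - \<beta> k) * w k)
        + (\<Sum>k=1..n-1. if k = m - 1 \<and> 2 \<le> m then d m * \<beta> 1 * w k else 0)
        - (\<Sum>k=1..n-1. if k = m \<and> m \<le> n - 1 then d m * \<beta> n * w k else 0)"
    unfolding sum.distrib[symmetric] sum_subtractf[symmetric]
    by (rule sum.cong) (auto simp: zeta_def algebra_simps)
  also have "(\<Sum>k=1..n-1. if k = m - 1 \<and> 2 \<le> m then d m * \<beta> 1 * w k else 0) = d m * \<beta> 1 * w (m - 1)"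
    using m w by (cases "2 \<le> m") (auto simp: sum.delta')
  also have "(\<Sum>k=1..n-1. if k = m \<and> m \<le> n - 1 then d m * \<beta> n * w k else 0) = d m * \<beta> n * w m"
  proof (cases "m = n")
    case False
    then have "m \<le> n - 1" using m by auto
    then show ?thesis using m by (simp add: sum.delta')
  next
    case True
    moreover have "\<not> n \<le> n - 1" using n2 by simp
    ultimately show ?thesis using w by simp
  qed
  finally show ?thesis by (simp add: algebra_simps)
qed

lemma sum_beta_mult_diff:
  fixes v :: "nat \<Rightarrow> real"
  assumes "\<And>k. k \<in> {1..n-1} \<Longrightarrow> v k = 0"
  shows "(\<Sum>k=1..n. \<beta> k * (v k - v (k - 1))) = \<beta> n * v n - \<beta> 1 * v 0"
  using sum_mult_diff_by_parts[of n \<beta> v] n2 assms by simp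

lemma Ysq_phi_at_alpha:
  assumes j: "j \<le> n"
  shows "Ysq c (phi m (alpha a j))
    = of_real (if j = 0 then coeff_sq c (m - 1) else if j = n then coeff_sq c m else 0)"
proof -
  consider "j = 0" | "j = n" | "j \<in> {1..n-1}" using j by fastforce
  then show ?thesis
  proof cases
    case 1
    have "m - 1 \<le> n" using m by auto
    then show ?thesis using 1 by (simp add: phi_def Ysq_at_alpha)
  next
    case 2
    have "phi m (alpha a n) = alpha a m" "m \<le> n" "n \<noteq> 0"
      using m n2 alpha_eq_pred[of m a] by (auto simp: phi_def alpha_n)
    then show ?thesis using 2 by (simp add: Ysq_at_alpha)
  next
    case 3
    then show ?thesis using phi_alpha_in_middle[OF 3] by (auto simp: Ysq_vanishes_on_middle)
  qed
qed

lemma set_integral_P0_rescaled_Ysq':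
  "(LINT u:{0..1}|lborel. of_real (P0 u) * (of_real (a m) * Ysq' c (phi m u)))
     = of_real (\<beta> n * coeff_sq c m - \<beta> 1 * coeff_sq c (m - 1))"
proof -
  define G where "G u = Ysq c (phi m u)" for u
  define G' where "G' u = a m *\<^sub>R Ysq' c (phi m u)" for u
  have "a m \<noteq> 0" using apos m by force
  then have G: "bounded_piecewise_derivative G G' ((\<lambda>s. (s - alpha a (m - 1)) / a m) ` kinks)"
    unfolding G_def[abs_def] G'_def[abs_def] phi_def
    by (rule bounded_piecewise_derivative_affine[OF bounded_piecewise_derivative_Ysq])
  define v where
    "v j = (if j = 0 then coeff_sq c (m - 1) else if j = n then coeff_sq c m else 0)" for j
  have Gv: "G (alpha a j) = of_real (v j)" if "j \<le> n" for j
    using Ysq_phi_at_alpha[OF that] by (simp add: G_def v_def)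
  have G'_zero: "G' (phi m u) = 0" if "u \<in> {0..1}" for u
    using phi_in_middle[OF phi_maps_unit_interval[OF m that]] by (simp add: G'_def Ysq_vanishes_on_middle)
  have rescaled: "(LINT u:{0..1}|lborel. of_real (P0 u) * (of_real (a m) * G' (phi m u))) = 0"
    unfolding set_lebesgue_integral_def
    by (intro integral_eq_zero_AE AE_I2) (simp add: G'_zero indicator_def)
  have "of_real (a m) * Ysq' c (phi m u) = G' u" for u
    by (simp add: G'_def scaleR_conv_of_real)
  then have "(LINT u:{0..1}|lborel. of_real (P0 u) * (of_real (a m) * Ysq' c (phi m u)))
      = (\<Sum>k=1..n. of_real (\<beta> k) * (G (alpha a k) - G (alpha a (k - 1))))"
    using set_integral_P0_derivative[OF G] rescaled by simp
  also have "\<dots> = of_real (\<Sum>k=1..n. \<beta> k * (v k - v (k - 1)))"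
    unfolding of_real_sum by (rule sum.cong) (auto simp: Gv)
  also have "\<dots> = of_real (\<beta> n * coeff_sq c m - \<beta> 1 * coeff_sq c (m - 1))"
    using n2 by (subst sum_beta_mult_diff) (auto simp: v_def)
  finally show ?thesis .
qed

lemma set_integral_P0_Ysq':
  "(LINT x:{0..1}|lborel. of_real (P0 x) * Ysq' c x)
     = - of_real (\<Sum>k=1..n-1. zeta n m d \<beta> k * (cmod (c k))\<^sup>2)"
proof -
  have w: "coeff_sq c 0 = 0" "coeff_sq c n = 0" by (auto simp: coeff_sq_def)
  have "(LINT x:{0..1}|lborel. of_real (P0 x) * Ysq' c x)
      = (\<Sum>k=1..n. of_real (\<beta> k) * (Ysq c (alpha a k) - Ysq c (alpha a (k - 1))))
        + of_real (d m) * of_real (\<beta> n * coeff_sq c m - \<beta> 1 * coeff_sq c (m - 1))"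
    using set_integral_P0_derivative[OF bounded_piecewise_derivative_Ysq]
    by (simp add: set_integral_P0_rescaled_Ysq')
  also have "(\<Sum>k=1..n. of_real (\<beta> k) * (Ysq c (alpha a k) - Ysq c (alpha a (k - 1))))
      = of_real (\<Sum>k=1..n. \<beta> k * (coeff_sq c k - coeff_sq c (k - 1)))"
    unfolding of_real_sum by (rule sum.cong) (auto simp: Ysq_at_alpha)
  also have "(\<Sum>k=1..n. \<beta> k * (coeff_sq c k - coeff_sq c (k - 1)))
      = (\<Sum>k=1..n-1. coeff_sq c k * (\<beta> k - \<beta> (k + 1)))"
    using sum_mult_diff_by_parts[of n \<beta> "coeff_sq c"] n2 w by simp
  also have "(\<Sum>k=1..n-1. coeff_sq c k * (\<beta> k - \<beta> (k + 1)))
      = - (\<Sum>k=1..n-1. (\<beta> (k + 1) - \<beta> k) * coeff_sq c k)"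
    by (simp add: sum_negf[symmetric] algebra_simps)
  also have "of_real (- (\<Sum>k=1..n-1. (\<beta> (k + 1) - \<beta> k) * coeff_sq c k))
      + of_real (d m) * of_real (\<beta> n * coeff_sq c m - \<beta> 1 * coeff_sq c (m - 1))
      = - (of_real (\<Sum>k=1..n-1. zeta n m d \<beta> k * coeff_sq c k) :: complex)"
    unfolding sum_zeta_mult[OF w] by (simp add: algebra_simps)
  also have "(\<Sum>k=1..n-1. zeta n m d \<beta> k * coeff_sq c k) = (\<Sum>k=1..n-1. zeta n m d \<beta> k * (cmod (c k))\<^sup>2)"
    by (rule sum.cong) (auto simp: coeff_sq_def)
  finally show ?thesis .
qed

lemma ebasis_eq: "ebasis a n m k = (\<lambda>x. of_real (basis k x))"
  by (simp add: ebasis_def basis_def)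

lemma ebasis_at_alpha:
  "j \<in> {1..n-1} \<Longrightarrow> k \<le> n \<Longrightarrow> ebasis a n m j (alpha a k) = (if j = k then 1 else 0)"
  by (simp add: ebasis_eq basis_at_alpha)

lemma span_ebasis_eq_Y:
  assumes K: "K \<subseteq> {1..n-1}" and y: "y \<in> fs.span (ebasis a n m ` K)"
  shows "y = Y (\<lambda>k. y (alpha a k))" "\<And>k. k \<in> {1..n-1} - K \<Longrightarrow> y (alpha a k) = 0"
proof -
  have "y = Y (\<lambda>k. y (alpha a k)) \<and> (\<forall>k\<in>{1..n-1} - K. y (alpha a k) = 0)"
    using y
  proof (induction rule: fs.span_induct_alt)
    case base
    show ?case by (simp add: Y_def fun_eq_iff)
  next
    case (step c x y)
    have IH1: "y = Y (\<lambda>k. y (alpha a k))" and IH2: "\<forall>k\<in>{1..n-1} - K. y (alpha a k) = 0"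
      using step.IH by blast+
    have IH: "Y (\<lambda>k. y (alpha a k)) t = y t" for t
      using fun_cong[OF IH1[symmetric]] .
    from step obtain j where j: "j \<in> K" and x: "x = ebasis a n m j" by auto
    have jn: "j \<in> {1..n-1}" using j K by auto
    have x_alpha: "x (alpha a k) = (if j = k then 1 else 0)" if "k \<le> n" for k
      using ebasis_at_alpha[OF jn that] by (simp add: x)
    have "fscale c x + y = Y (\<lambda>k. (fscale c x + y) (alpha a k))"
    proof
      fix t
      have "Y (\<lambda>k. (fscale c x + y) (alpha a k)) t
          = (\<Sum>k\<in>{1..n-1}. (if j = k then c * of_real (basis k t) else 0)) + Y (\<lambda>k. y (alpha a k)) t"
        unfolding Y_def sum.distrib[symmetric]
        by (rule sum.cong) (auto simp: x_alpha algebra_simps)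
      also have "\<dots> = (fscale c x + y) t"
        using jn by (simp add: sum.delta x ebasis_eq IH)
      finally show "(fscale c x + y) t = Y (\<lambda>k. (fscale c x + y) (alpha a k)) t" ..
    qed
    moreover have "\<forall>k\<in>{1..n-1} - K. (fscale c x + y) (alpha a k) = 0"
      using IH2 j x_alpha by auto
    ultimately show ?case by blast
  qed
  then show "y = Y (\<lambda>k. y (alpha a k))" "\<And>k. k \<in> {1..n-1} - K \<Longrightarrow> y (alpha a k) = 0"
    by blast+
qed

lemma inj_on_ebasis: "inj_on (ebasis a n m) {1..n-1}"
proof (rule inj_onI)
  fix i j assume i: "i \<in> {1..n-1}" and j: "j \<in> {1..n-1}" and eq: "ebasis a n m i = ebasis a n m j"
  have "i \<le> n" using i by auto
  then have "ebasis a n m j (alpha a i) = 1"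
    using ebasis_at_alpha[OF i] eq by simp
  then show "i = j"
    using ebasis_at_alpha[OF j \<open>i \<le> n\<close>] by (auto split: if_splits)
qed

lemma independent_ebasis: "fs.independent (ebasis a n m ` {1..n-1})"
  unfolding fs.independent_explicit_module
proof (intro allI impI)
  fix t u v
  assume t: "finite t" "t \<subseteq> ebasis a n m ` {1..n-1}" and sum: "(\<Sum>v\<in>t. fscale (u v) v) = 0"
    and v: "v \<in> t"
  obtain j where j: "j \<in> {1..n-1}" and vj: "v = ebasis a n m j" using t v by auto
  have delta: "w (alpha a j) = (if w = v then 1 else 0)" if "w \<in> t" for w
  proof -
    obtain k where k: "k \<in> {1..n-1}" and wk: "w = ebasis a n m k" using t \<open>w \<in> t\<close> by auto
    have "(w = v) = (k = j)" using inj_onD[OF inj_on_ebasis _ k j] by (auto simp: wk vj)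
    moreover have "j \<le> n" using j by auto
    ultimately show ?thesis using ebasis_at_alpha[OF k] by (simp add: wk vj)
  qed
  have "(\<Sum>w\<in>t. fscale (u w) w) (alpha a j) = (\<Sum>w\<in>t. if w = v then u w else 0)"
    unfolding sum_fun_apply by (intro sum.cong) (auto simp: delta)
  then have "(\<Sum>w\<in>t. fscale (u w) w) (alpha a j) = u v"
    using t v by (simp add: sum.delta')
  then show "u v = 0" using sum by simp
qed

lemma dim_span_ebasis: "K \<subseteq> {1..n-1} \<Longrightarrow> fs.dim (fs.span (ebasis a n m ` K)) = card K"
  using fs.dim_span_eq_card_independent[OF fs.independent_mono[OF independent_ebasis]]
    card_image[OF inj_on_subset[OF inj_on_ebasis]]
  by (simp add: image_mono)

lemma vector_derivative_Y: "x \<notin> kinks \<Longrightarrow> vector_derivative (Y c) (at x) = Y' c x"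
  using bounded_piecewise_derivative_Y unfolding bounded_piecewise_derivative_def
  by (blast intro: vector_derivative_at)

lemma vector_derivative_Ysq:
  "x \<notin> kinks \<Longrightarrow> vector_derivative (\<lambda>t. Y c t * cnj (Y c t)) (at x) = Ysq' c x"
  using bounded_piecewise_derivative_Ysq unfolding bounded_piecewise_derivative_def Ysq_def[abs_def]
  by (blast intro: vector_derivative_at)

definition energy :: "(nat \<Rightarrow> complex) \<Rightarrow> real" where
  "energy c = (LINT x:{0..1}|lborel. (cmod (Y' c x))\<^sup>2)"

lemma set_integral_Y'_mult_cnj: "(LINT x:{0..1}|lborel. Y' c x * cnj (Y' c x)) = of_real (energy c)"
proof -
  have "(LINT x:{0..1}|lborel. Y' c x * cnj (Y' c x)) = (LINT x:{0..1}|lborel. of_real ((cmod (Y' c x))\<^sup>2))"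
    by (simp only: complex_norm_square)
  also have "\<dots> = of_real (energy c)"
    unfolding energy_def by (rule set_integral_complex_of_real)
  finally show ?thesis .
qed

lemma innerH_Y: "innerH (Y c) (Y c) = of_real (energy c)"
  unfolding innerH_def set_integral_Y'_mult_cnj[symmetric]
  by (rule set_integral_cong_finite[where S = kinks]) (auto simp: kinks_def vector_derivative_Y)

lemma Cform_Y:
  "Cform P lam (Y c) (Y c) = of_real (energy c - lam * (\<Sum>k=1..n-1. zeta n m d \<beta> k * (cmod (c k))\<^sup>2))"
proof -
  obtain B where B: "\<And>x. norm (Ysq' c x) \<le> B" and [measurable]: "Ysq' c \<in> borel_measurable borel"
    and finite: "finite kinks"
    using bounded_piecewise_derivative_Ysq unfolding bounded_piecewise_derivative_def by blast
  obtain B' where B': "\<And>x. norm (Y' c x) \<le> B'"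
    using bounded_piecewise_derivative_Y unfolding bounded_piecewise_derivative_def by blast
  have int1: "set_integrable lborel {0..1} (\<lambda>x. Y' c x * cnj (Y' c x))"
    by (rule set_integrable_Icc_bounded[where B = "B' * B'"])
       (use B' in \<open>auto simp: norm_mult intro: mult_mono order_trans[OF norm_ge_zero]\<close>)
  have int2: "set_integrable lborel {0..1} (\<lambda>x. of_real lam * (of_real (P0 x) * Ysq' c x))"
    using set_integrable_scaleR_bounded[OF integrable_P0, of "Ysq' c" B] by (simp add: B scaleR_conv_of_real)
  have "Cform P lam (Y c) (Y c) = (LINT x:{0..1}|lborel. vector_derivative (Y c) (at x) *
      cnj (vector_derivative (Y c) (at x)) + of_real (lam * P0 x) *
      vector_derivative (\<lambda>t. Y c t * cnj (Y c t)) (at x))"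
    unfolding Cform_def by (rule set_lebesgue_integral_cong) (auto simp: P0_def)
  also have "\<dots> = (LINT x:{0..1}|lborel. Y' c x * cnj (Y' c x) + of_real lam * (of_real (P0 x) * Ysq' c x))"
    by (rule set_integral_cong_finite[OF finite]) (auto simp: vector_derivative_Y vector_derivative_Ysq)
  also have "\<dots> = (LINT x:{0..1}|lborel. Y' c x * cnj (Y' c x))
      + (LINT x:{0..1}|lborel. of_real lam * (of_real (P0 x) * Ysq' c x))"
    by (rule set_integral_add(2)[OF int1 int2])
  also have "\<dots> = of_real (energy c) + of_real lam * (LINT x:{0..1}|lborel. of_real (P0 x) * Ysq' c x)"
    by (simp add: set_integral_Y'_mult_cnj)
  finally show ?thesis
    by (simp add: set_integral_P0_Ysq')
qed

lemma energy_nonneg: "0 \<le> energy c"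
  unfolding energy_def set_lebesgue_integral_def
  by (intro integral_nonneg_AE AE_I2) (simp add: indicator_def)

lemma set_integrable_norm_Y'_sq: "set_integrable lborel {0..1} (\<lambda>x. (cmod (Y' c x))\<^sup>2)"
  by (rule set_integrable_Icc_bounded[where B = "(\<Sum>k\<in>{1..n-1}. cmod (c k) * slope k)\<^sup>2"])
     (use power_mono[OF norm_Y'_le] in auto)

definition energy_bound :: real where
  "energy_bound = (\<Sum>k\<in>{1..n-1}. slope k)\<^sup>2"

lemma energy_le: "energy c \<le> energy_bound * (\<Sum>k\<in>{1..n-1}. (cmod (c k))\<^sup>2)"
proof -
  define R where "R = (\<Sum>k\<in>{1..n-1}. (cmod (c k))\<^sup>2)"
  have "cmod (c k) \<le> sqrt R" if "k \<in> {1..n-1}" for k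
    using real_sqrt_le_mono[OF member_le_sum[OF that, of "\<lambda>k. (cmod (c k))\<^sup>2"]] by (simp add: R_def)
  then have bound: "cmod (Y' c x) \<le> sqrt R * (\<Sum>k\<in>{1..n-1}. slope k)" for x
    unfolding sum_distrib_left
    by (intro order_trans[OF norm_Y'_le sum_mono] mult_right_mono) (use slope_pos in \<open>force+\<close>)
  have "0 \<le> R" unfolding R_def by (rule sum_nonneg) simp
  then have pointwise: "(cmod (Y' c x))\<^sup>2 \<le> energy_bound * R" for x
    using power_mono[OF bound[of x], of 2] by (simp add: energy_bound_def power_mult_distrib mult.commute)
  have "energy c \<le> (LINT x:{0..1::real}|lborel. energy_bound * R)"
    unfolding energy_def
    by (rule set_integral_mono) (auto intro: set_integrable_norm_Y'_sq borel_integrable_atLeastAtMost' pointwise)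
  also have "\<dots> = energy_bound * R"
    by (subst set_integral_const) (auto simp: emeasure_lborel_Icc_eq)
  finally show ?thesis by (simp add: R_def)
qed

lemma energy_eq_0_imp:
  assumes energy: "energy c = 0" and k: "k \<in> {1..n-1}"
  shows "c k = 0"
proof -
  have "integrable lborel (\<lambda>x. indicator {0..1} x *\<^sub>R (cmod (Y' c x))\<^sup>2)"
    using set_integrable_norm_Y'_sq unfolding set_integrable_def .
  then have "AE x in lborel. indicator {0..1} x *\<^sub>R (cmod (Y' c x))\<^sup>2 = 0"
    using energy unfolding energy_def set_lebesgue_integral_def
    by (subst (asm) integral_nonneg_eq_0_iff_AE) (auto simp: indicator_def)
  moreover have kn: "k \<le> n" using k by auto
  ultimately have "AE x in lborel. x \<in> {0..alpha a k} \<longrightarrow> Y' c x = 0"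
    using alpha_le_1[OF kn] by (auto elim!: eventually_mono simp: indicator_def)
  then have "(LINT x:{0..alpha a k}|lborel. Y' c x) = 0"
    unfolding set_lebesgue_integral_def
    by (intro integral_eq_zero_AE) (auto elim!: eventually_mono simp: indicator_def)
  moreover have "(LINT x:{0..alpha a k}|lborel. Y' c x) = Y c (alpha a k) - Y c (alpha a 0)"
    using set_integral_bounded_piecewise_derivative[OF bounded_piecewise_derivative_Y] alpha_nonneg[OF kn]
    by simp
  ultimately show ?thesis using k kn Y_at_alpha[of 0 c] by (simp add: Y_at_alpha)
qed

definition Kpos :: "nat set" where
  "Kpos = {k \<in> {1..n-1}. zeta n m d \<beta> k > 0}"

lemma Re_forms_H2:
  assumes y: "y \<in> H2 a n m"
  shows "Re (Cform P lam y y) = energy (\<lambda>k. y (alpha a k))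
           - lam * (\<Sum>k=1..n-1. zeta n m d \<beta> k * (cmod (y (alpha a k)))\<^sup>2)"
    "Re (innerH y y) = energy (\<lambda>k. y (alpha a k))"
proof -
  have "y = Y (\<lambda>k. y (alpha a k))"
    by (rule span_ebasis_eq_Y(1)[OF order_refl]) (use y in \<open>simp add: H2_def\<close>)
  then show "Re (Cform P lam y y) = energy (\<lambda>k. y (alpha a k))
           - lam * (\<Sum>k=1..n-1. zeta n m d \<beta> k * (cmod (y (alpha a k)))\<^sup>2)"
    "Re (innerH y y) = energy (\<lambda>k. y (alpha a k))"
    by (metis Cform_Y Re_complex_of_real, metis innerH_Y Re_complex_of_real)
qed

definition lam0 :: real where
  "lam0 = 1 + (\<Sum>k\<in>Kpos. 2 * energy_bound / zeta n m d \<beta> k)"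

lemma energy_bound_nonneg: "0 \<le> energy_bound"
  by (simp add: energy_bound_def)

lemma lam0_pos: "0 < lam0"
  using energy_bound_nonneg by (auto simp: lam0_def Kpos_def intro!: add_pos_nonneg sum_nonneg)

lemma negative_on_span_Kpos:
  assumes lam: "lam \<ge> lam0" and y: "y \<in> fs.span (ebasis a n m ` Kpos)"
  shows "Re (Cform P lam y y) \<le> - Re (innerH y y)"
proof -
  define c where "c k = y (alpha a k)" for k
  have Kpos: "Kpos \<subseteq> {1..n-1}" by (auto simp: Kpos_def)
  then have yH: "y \<in> H2 a n m"
    using y fs.span_mono[OF image_mono[OF Kpos]] by (auto simp: H2_def)
  have "2 * energy_bound * (cmod (c k))\<^sup>2 \<le> lam * (zeta n m d \<beta> k * (cmod (c k))\<^sup>2)"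
    if k: "k \<in> {1..n-1}" for k
  proof (cases "k \<in> Kpos")
    case True
    then have z: "zeta n m d \<beta> k > 0" by (simp add: Kpos_def)
    have "2 * energy_bound / zeta n m d \<beta> k \<le> lam"
      using member_le_sum[OF True, of "\<lambda>k. 2 * energy_bound / zeta n m d \<beta> k"] energy_bound_nonneg lam
      by (force simp: Kpos_def lam0_def)
    then have "2 * energy_bound \<le> lam * zeta n m d \<beta> k" using z by (simp add: divide_le_eq)
    then show ?thesis by (simp add: mult_right_mono mult.assoc[symmetric])
  next
    case False
    then show ?thesis using span_ebasis_eq_Y(2)[OF Kpos y] k by (simp add: c_def)
  qed
  then have "2 * energy_bound * (\<Sum>k=1..n-1. (cmod (c k))\<^sup>2)
      \<le> lam * (\<Sum>k=1..n-1. zeta n m d \<beta> k * (cmod (c k))\<^sup>2)"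
    unfolding sum_distrib_left by (intro sum_mono) auto
  then show ?thesis
    using Re_forms_H2(1)[OF yH, of lam] Re_forms_H2(2)[OF yH] energy_le[of c] unfolding c_def by linarith
qed

lemma negative_subspace_Int_span_nonpos:
  assumes lam: "lam > 0" and eps: "eps > 0"
    and M: "\<forall>y\<in>M. Re (Cform P lam y y) \<le> - eps * Re (innerH y y)"
  shows "M \<inter> fs.span (ebasis a n m ` ({1..n-1} - Kpos)) \<subseteq> {0}"
proof
  fix y assume "y \<in> M \<inter> fs.span (ebasis a n m ` ({1..n-1} - Kpos))"
  then have yM: "y \<in> M" and y: "y \<in> fs.span (ebasis a n m ` ({1..n-1} - Kpos))" by auto
  define c where "c k = y (alpha a k)" for k
  have yH: "y \<in> H2 a n m"
    using y fs.span_mono[OF image_mono[OF Diff_subset]] by (auto simp: H2_def)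
  have termwise: "zeta n m d \<beta> k * (cmod (c k))\<^sup>2 \<le> 0" if "k \<in> {1..n-1}" for k
    using span_ebasis_eq_Y(2)[OF _ y] that
    by (cases "k \<in> Kpos") (auto simp: Kpos_def c_def mult_nonpos_nonneg)
  have "(\<Sum>k=1..n-1. zeta n m d \<beta> k * (cmod (c k))\<^sup>2) \<le> 0"
    by (rule sum_nonpos) (use termwise in auto)
  then have "lam * (\<Sum>k=1..n-1. zeta n m d \<beta> k * (cmod (c k))\<^sup>2) \<le> 0"
    using lam by (simp add: mult_nonneg_nonpos)
  moreover have "Re (Cform P lam y y) \<le> - eps * Re (innerH y y)" using M yM by blast
  then have "energy c - lam * (\<Sum>k=1..n-1. zeta n m d \<beta> k * (cmod (c k))\<^sup>2) \<le> - eps * energy c"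
    unfolding Re_forms_H2(1)[OF yH, of lam] Re_forms_H2(2)[OF yH] c_def .
  ultimately have "energy c \<le> - eps * energy c" by linarith
  then have "energy c = 0"
    using mult_nonneg_nonneg[OF less_imp_le[OF eps] energy_nonneg[of c]] energy_nonneg[of c] by linarith
  then have "Y c = 0"
    using energy_eq_0_imp[of c] by (simp add: Y_def fun_eq_iff)
  moreover have "y = Y c"
    unfolding c_def by (rule span_ebasis_eq_Y(1)[OF _ y]) auto
  ultimately show "y \<in> {0}" by simp
qed

lemma ind_Cform_H2:
  assumes lam: "lam \<ge> lam0"
  shows "ind (Cform P lam) (H2 a n m) = enat (card Kpos)"
proof -
  have Kpos: "Kpos \<subseteq> {1..n-1}" by (auto simp: Kpos_def)
  define S where "S = {enat (fs.dim M) | M. fs.subspace M \<and> M \<subseteq> H2 a n m \<and>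
      (\<exists>eps>0. \<forall>y\<in>M. Re (Cform P lam y y) \<le> - eps * Re (innerH y y))}"
  have "fs.span (ebasis a n m ` Kpos) \<subseteq> H2 a n m"
    unfolding H2_def by (rule fs.span_mono) (use Kpos in auto)
  moreover have "\<forall>y\<in>fs.span (ebasis a n m ` Kpos). Re (Cform P lam y y) \<le> - 1 * Re (innerH y y)"
    using negative_on_span_Kpos[OF lam] by simp
  ultimately have "enat (card Kpos) \<in> S"
    unfolding S_def using dim_span_ebasis[OF Kpos]
    by (intro CollectI exI[of _ "fs.span (ebasis a n m ` Kpos)"]) (auto intro!: exI[of _ 1])
  moreover have "x \<le> enat (card Kpos)" if "x \<in> S" for x
  proof -
    obtain M eps where M: "x = enat (fs.dim M)" "fs.subspace M" "M \<subseteq> H2 a n m" "eps > 0"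
      "\<forall>y\<in>M. Re (Cform P lam y y) \<le> - eps * Re (innerH y y)"
      using \<open>x \<in> S\<close> unfolding S_def by blast
    have "fs.dim M + card (ebasis a n m ` ({1..n-1} - Kpos)) \<le> card (ebasis a n m ` {1..n-1})"
    proof (rule fs.dim_add_card_le)
      show "M \<subseteq> fs.span (ebasis a n m ` {1..n-1})" using M(3) by (simp add: H2_def)
      show "fs.independent (ebasis a n m ` ({1..n-1} - Kpos))"
        by (rule fs.independent_mono[OF independent_ebasis]) auto
      show "M \<inter> fs.span (ebasis a n m ` ({1..n-1} - Kpos)) \<subseteq> {0}"
        using negative_subspace_Int_span_nonpos[OF _ M(4,5)] lam lam0_pos by simp
    qed (auto simp: M(2) intro: fs.span_base)
    then have "fs.dim M + card ({1..n-1} - Kpos) \<le> card {1..n-1}"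
      by (simp add: card_image inj_on_ebasis inj_on_subset[OF inj_on_ebasis])
    then show ?thesis
      using M(1) card_Diff_subset[OF finite_subset[OF Kpos] Kpos] card_mono[OF _ Kpos] by simp
  qed
  ultimately have "Sup S = enat (card Kpos)"
    by (intro antisym) (auto intro: Sup_least Sup_upper)
  then show ?thesis unfolding ind_def S_def .
qed

end

theorem mainTheorem4:
  fixes n m :: nat and a d \<beta> :: "nat \<Rightarrow> real" and P :: "real \<Rightarrow> real"
  assumes n2: "n \<ge> 2"
    and apos: "\<And>k. k \<in> {1..n} \<Longrightarrow> a k > 0"
    and asum: "(\<Sum>k=1..n. a k) = 1"
    and dsum: "(\<Sum>k=1..n. a k * (d k)\<^sup>2) < 1"
    and m: "m \<in> {1..n}"
    and dzero: "\<And>k. k \<in> {1..n} \<Longrightarrow> k \<noteq> m \<Longrightarrow> d k = 0"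
    and Pmeas: "set_borel_measurable lborel {0..1} P"
    and PL2: "set_integrable lborel {0..1} (\<lambda>x. (P x)\<^sup>2)"
    and Pself: "\<And>k. k \<in> {1..n} \<Longrightarrow>
       AE x in lborel. x \<in> {0..1} \<longrightarrow> P (alpha a (k - 1) + a k * x) = \<beta> k + d k * P x"
  shows "\<forall>\<^sub>F lam in at_top. ind (Cform P lam) (H2 a n m) = enat (Zplus n m d \<beta>)"
proof -
  \<comment> \<open>\<open>dsum\<close> only makes \<open>P\<close> unique; the computation needs just the self-similarity of \<open>P\<close>.\<close>
  interpret self_similar n m a d \<beta> P
    using n2 apos asum m dzero Pmeas PL2 Pself by unfold_locales
  have "Zplus n m d \<beta> = card Kpos"
    by (simp add: Zplus_def Kpos_def)
  then show ?thesis
    unfolding eventually_at_top_linorder using ind_Cform_H2 by auto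
qed

end
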